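(* Let $u\in\mathbb{R}^d$ be a utility vector, $\mathrm{util}(x)=u^Tx$, let $\epsilon\in[0,1]$, and let $A$ be a finite set of pairs $(y,z)$ of tuples in $\mathbb{R}^d$ with $\mathrm{util}(y)<\mathrm{util}(z)$ for each pair. Consider a tuple $x\in\mathbb{R}^d$ such that $\mathrm{util}(x)>\mathrm{util}(z)$ and $\mathrm{util}(x)-\mathrm{util}(z)>\epsilon\,\mathrm{util}(x)$ for every $(y,z)\in A$. Then there exists a vector $v\in\mathbb{R}^d$ such that, for all $(y,z)\in A$, $$v^T(z-y)\ge 1,\qquad v^T(x-z)\ge 1,\qquad v^T((1-\epsilon)x-z)\ge 1.$$ *)

theory Defs
  imports "HOL-Analysis.Analysis"
begin

end

theory Submission
  imports Defs
begin

text \<open>All three differences have positive utility, so a large enough multiple of \<open>u\<close>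
  separates them by margin 1; finiteness of \<open>A\<close> makes the smallest utility gap positive.\<close>

lemma finite_inner_pos_imp_scaleR_inner_ge_1:
  fixes u :: "'a::real_inner" and W :: "'a set"
  assumes "finite W" and pos: "\<And>w. w \<in> W \<Longrightarrow> u \<bullet> w > 0"
  shows "\<exists>c>0. \<forall>w\<in>W. (c *\<^sub>R u) \<bullet> w \<ge> 1"
proof (cases "W = {}")
  case True
  then show ?thesis by (intro exI[of _ 1]) simp
next
  case False
  define m where "m = Min ((\<bullet>) u ` W)"
  have "m > 0"
    unfolding m_def using assms False by (subst Min_gr_iff) auto
  moreover have "m \<le> u \<bullet> w" if "w \<in> W" for w
    unfolding m_def using assms(1) that by simp
  ultimately show ?thesis
    by (intro exI[of _ "1 / m"]) (simp add: field_simps)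
qed

theorem proposition6p1:
  fixes u x :: "real ^ 'd" and \<epsilon> :: real and A :: "((real ^ 'd) \<times> (real ^ 'd)) set"
  assumes "0 \<le> \<epsilon>" and "\<epsilon> \<le> 1"
    and "finite A"
    and "\<forall>(y, z) \<in> A. u \<bullet> y < u \<bullet> z"
    and "\<forall>(y, z) \<in> A. u \<bullet> x > u \<bullet> z"
    and "\<forall>(y, z) \<in> A. u \<bullet> x - u \<bullet> z > \<epsilon> * (u \<bullet> x)"
  shows "\<exists>v :: real ^ 'd. \<forall>(y, z) \<in> A.
           v \<bullet> (z - y) \<ge> 1 \<and> v \<bullet> (x - z) \<ge> 1 \<and> v \<bullet> ((1 - \<epsilon>) *\<^sub>R x - z) \<ge> 1"
proof -
  define W where "W = (\<lambda>(y, z). z - y) ` A \<union> (\<lambda>(y, z). x - z) ` A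
                      \<union> (\<lambda>(y, z). (1 - \<epsilon>) *\<^sub>R x - z) ` A"
  have "finite W"
    unfolding W_def using \<open>finite A\<close> by simp
  moreover have "u \<bullet> w > 0" if "w \<in> W" for w
    using that assms(4-6) unfolding W_def
    by (auto simp: inner_diff_right algebra_simps)
  ultimately obtain c where "\<forall>w\<in>W. (c *\<^sub>R u) \<bullet> w \<ge> 1"
    using finite_inner_pos_imp_scaleR_inner_ge_1 by blast
  then show ?thesis
    unfolding W_def by (intro exI[of _ "c *\<^sub>R u"]) fastforce
qed

end
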